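(* Let $\kappa$ be an infinite cardinal. There is a $\kappa^+$-system of width $\kappa$ with no cofinal branch.
   Context: Let $\lambda$ be an infinite regular cardinal. A binary relation $R$ is tree-like if whenever $a<_Rc$ and $b<_Rc$, then $a,b$ are $R$-comparable ($a=b$, $a<_Rb$ or $b<_Ra$). A $\lambda$-system is $S=\langle\bigcup_{\alpha\in I}\{\alpha\}\times\kappa_\alpha,\mathcal{R}\rangle$ where: $I\subseteq\lambda$ is unbounded, each $\kappa_\alpha$ is a cardinal with $0<\kappa_\alpha<\lambda$ (level $S_\alpha=\{\alpha\}\times\kappa_\alpha$); $\mathcal{R}$ is a set of binary, transitive, tree-like relations on the underlying set with $0<|\mathcal{R}|<\lambda$; if $(\alpha_0,\beta_0)<_R(\alpha_1,\beta_1)$ for $R\in\mathcal{R}$ then $\alpha_0<\alpha_1$; and for all $\alpha_0<\alpha_1$ in $I$ there are $\beta_0<\kappa_{\alpha_0},\beta_1<\kappa_{\alpha_1}$, $R\in\mathcal{R}$ with $(\alpha_0,\beta_0)<_R(\alpha_1,\beta_1)$. $\mathrm{width}(S)=\max(\sup_\alpha\kappa_\alpha,|\mathcal{R}|)$. A branch through $R\in\mathcal{R}$ is a set of pairwise $R$-comparable elements; it is cofinal if it meets $S_\alpha$ for unboundedly many $\alpha\in I$; $S$ has a cofinal branch if some $R\in\mathcal{R}$ has a cofinal branch. *)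

theory Defs
  imports Main
begin

unbundle cardinal_syntax

text \<open>
  Cardinals are represented as in HOL's BNF cardinal library: a cardinal is a
  cardinal order relation (Card_order), and the ordinals below the cardinal
  lambda are the elements of Field L, ordered by L.  The level S_alpha of a
  system is {alpha} x K alpha, where K alpha is a nonempty set of size kappa_alpha
  (only its cardinality matters).
\<close>

definition tree_like :: "'n rel \<Rightarrow> bool" where
  "tree_like R \<longleftrightarrow>
     (\<forall>a b c. (a, c) \<in> R \<and> (b, c) \<in> R \<longrightarrow> a = b \<or> (a, b) \<in> R \<or> (b, a) \<in> R)"

definition lambda_system ::
  "'i rel \<Rightarrow> 'i set \<Rightarrow> ('i \<Rightarrow> 'b set) \<Rightarrow> ('i \<times> 'b) rel set \<Rightarrow> bool" where
  "lambda_system L I K RR \<longleftrightarrow>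
     Card_order L \<and> \<not> finite (Field L) \<and> regularCard L \<and>
     I \<subseteq> Field L \<and> cofinal I L \<and>
     (\<forall>\<alpha>\<in>I. K \<alpha> \<noteq> {} \<and> |K \<alpha>| <o L) \<and>
     RR \<noteq> {} \<and> |RR| <o L \<and>
     (\<forall>R\<in>RR. R \<subseteq> Sigma I K \<times> Sigma I K \<and> trans R \<and> tree_like R) \<and>
     (\<forall>R\<in>RR. \<forall>a b. (a, b) \<in> R \<longrightarrow> fst a \<noteq> fst b \<and> (fst a, fst b) \<in> L) \<and>
     (\<forall>\<alpha>0\<in>I. \<forall>\<alpha>1\<in>I. \<alpha>0 \<noteq> \<alpha>1 \<and> (\<alpha>0, \<alpha>1) \<in> L \<longrightarrow>
        (\<exists>\<beta>0\<in>K \<alpha>0. \<exists>\<beta>1\<in>K \<alpha>1. \<exists>R\<in>RR. ((\<alpha>0, \<beta>0), (\<alpha>1, \<beta>1)) \<in> R))"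

text \<open>
  width(S) = max(sup_alpha kappa_alpha, |RR|) equals the cardinal k.
  Written out: every kappa_alpha and |RR| is at most k, and either |RR| >= k or
  the supremum of the kappa_alpha is at least k, i.e. every cardinal mu < k
  (every such mu is the size of a subset of Field k) is exceeded by some kappa_alpha.
\<close>
definition has_width ::
  "'i set \<Rightarrow> ('i \<Rightarrow> 'b set) \<Rightarrow> ('i \<times> 'b) rel set \<Rightarrow> 'k rel \<Rightarrow> bool" where
  "has_width I K RR k \<longleftrightarrow>
     (\<forall>\<alpha>\<in>I. |K \<alpha>| \<le>o k) \<and> |RR| \<le>o k \<and>
     (k \<le>o |RR| \<or> (\<forall>A. A \<subseteq> Field k \<and> |A| <o k \<longrightarrow> (\<exists>\<alpha>\<in>I. |A| <o |K \<alpha>| )))"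

definition is_branch :: "'i set \<Rightarrow> ('i \<Rightarrow> 'b set) \<Rightarrow> ('i \<times> 'b) rel \<Rightarrow> ('i \<times> 'b) set \<Rightarrow> bool" where
  "is_branch I K R B \<longleftrightarrow> B \<subseteq> Sigma I K \<and>
     (\<forall>x\<in>B. \<forall>y\<in>B. x = y \<or> (x, y) \<in> R \<or> (y, x) \<in> R)"

definition is_cofinal_branch ::
  "'i rel \<Rightarrow> 'i set \<Rightarrow> ('i \<Rightarrow> 'b set) \<Rightarrow> ('i \<times> 'b) rel \<Rightarrow> ('i \<times> 'b) set \<Rightarrow> bool" where
  "is_cofinal_branch L I K R B \<longleftrightarrow> is_branch I K R B \<and>
     cofinal {\<alpha>\<in>I. \<exists>\<beta>. (\<alpha>, \<beta>) \<in> B} L"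

definition has_cofinal_branch ::
  "'i rel \<Rightarrow> 'i set \<Rightarrow> ('i \<Rightarrow> 'b set) \<Rightarrow> ('i \<times> 'b) rel set \<Rightarrow> bool" where
  "has_cofinal_branch L I K RR \<longleftrightarrow> (\<exists>R\<in>RR. \<exists>B. is_cofinal_branch L I K R B)"

end

theory Submission
  imports Defs "HOL-Library.Equipollence"
begin

text \<open>
  For every \<alpha> < \<kappa>^+ fix an injection e \<alpha> of \<alpha> into \<kappa> avoiding a point r, and put
  (\<gamma>, r) < (\<alpha>, e \<alpha> \<gamma>) for all \<gamma> < \<alpha>, using the single level \<kappa> everywhere.  Any two
  levels are joined, and the relation is tree-like because each e \<alpha> is injective.
  Every edge leads from a node in column r to a node outside column r, so the relation
  is transitive for trivial reasons and no three nodes on distinct levels are pairwise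
  comparable: a branch meets at most two levels and cannot be cofinal.
\<close>

lemma card_of_Diff_singleton_ordIso:
  assumes "infinite A" and "x \<in> A"
  shows "|A - {x}| =o |A|"
proof -
  have "insert x (A - {x}) \<approx> A - {x}"
    using assms by (intro infinite_insert_eqpoll) simp
  then show ?thesis
    using assms(2) by (simp add: insert_absorb eqpoll_def card_of_ordIso ordIso_symmetric)
qed

lemma finite_card_of_ordLess_Card_order:
  assumes "Card_order r" and "infinite (Field r)" and "finite A"
  shows "|A| <o r"
  using finite_ordLess_infinite[of "|A|" r] assms card_of_Well_order[of A]
  by (simp add: Field_card_of card_order_on_def)

lemma card_of_underS_cardSuc_ordLeq:
  assumes "Card_order k" and "\<alpha> \<in> Field (cardSuc k)"
  shows "|underS (cardSuc k) \<alpha>| \<le>o k"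
  using card_of_underS[OF cardSuc_Card_order[OF assms(1)] assms(2)]
    cardSuc_ordLeq_ordLess[OF assms(1) card_of_Card_order] by blast

lemma ex_inj_underS_cardSuc_avoiding:
  assumes "Card_order k" and "infinite (Field k)" and "x \<in> Field k"
  shows "\<exists>e. \<forall>\<alpha>\<in>Field (cardSuc k).
           inj_on (e \<alpha>) (underS (cardSuc k) \<alpha>) \<and> e \<alpha> ` underS (cardSuc k) \<alpha> \<subseteq> Field k - {x}"
proof -
  have k_iso: "k =o |Field k - {x}|"
    using card_of_Field_ordIso[OF assms(1)] card_of_Diff_singleton_ordIso[OF assms(2,3)]
    by (blast intro: ordIso_symmetric ordIso_transitive)
  have "\<exists>f. inj_on f (underS (cardSuc k) \<alpha>) \<and> f ` underS (cardSuc k) \<alpha> \<subseteq> Field k - {x}"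
    if "\<alpha> \<in> Field (cardSuc k)" for \<alpha>
    using card_of_underS_cardSuc_ordLeq[OF assms(1) that] k_iso
    by (simp add: card_of_ordLeq ordLeq_ordIso_trans)
  then show ?thesis
    by (intro bchoice) blast
qed

lemma cofinal_obtain_three_distinct:
  assumes "Well_order L" and "a \<in> Field L" and "cofinal C L"
  obtains c1 c2 c3 where "c1 \<in> C" "c2 \<in> C" "c3 \<in> C" "c1 \<noteq> c2" "c2 \<noteq> c3" "c1 \<noteq> c3"
proof -
  have above: "\<exists>c\<in>C. b \<noteq> c \<and> (b, c) \<in> L" if "b \<in> Field L" for b
    using assms(3) that unfolding cofinal_def by blast
  obtain c1 where c1: "c1 \<in> C" "(a, c1) \<in> L"
    using above[OF assms(2)] by blast
  obtain c2 where c2: "c2 \<in> C" "c1 \<noteq> c2" "(c1, c2) \<in> L"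
    using above[OF FieldI2[OF c1(2)]] by blast
  obtain c3 where c3: "c3 \<in> C" "c2 \<noteq> c3" "(c2, c3) \<in> L"
    using above[OF FieldI2[OF c2(3)]] by blast
  have "antisym L"
    using assms(1) by (simp add: well_order_on_def linear_order_on_def partial_order_on_def)
  then have "c1 \<noteq> c3"
    using c2(2,3) c3(3) by (auto dest: antisymD)
  with c1 c2 c3 show thesis by (intro that)
qed

lemma trans_if_targets_not_sources:
  assumes "\<And>a b. (a, b) \<in> R \<Longrightarrow> P a \<and> \<not> P b"
  shows "trans R"
  using assms unfolding trans_def by blast

text \<open>The comparability graph of such a relation is bipartite, hence triangle-free.\<close>
lemma not_pairwise_comparable3_if_targets_not_sources:
  assumes "\<And>a b. (a, b) \<in> R \<Longrightarrow> P a \<and> \<not> P b"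
    and "(x, y) \<in> R \<or> (y, x) \<in> R" and "(y, z) \<in> R \<or> (z, y) \<in> R" and "(x, z) \<in> R \<or> (z, x) \<in> R"
  shows False
  using assms by blast

locale fan =
  fixes L :: "'i rel" and V :: "'b set" and r :: 'b and e :: "'i \<Rightarrow> 'i \<Rightarrow> 'b"
  assumes root_in: "r \<in> V"
    and inj_e: "\<And>\<alpha>. \<alpha> \<in> Field L \<Longrightarrow> inj_on (e \<alpha>) (underS L \<alpha>)"
    and e_into: "\<And>\<alpha>. \<alpha> \<in> Field L \<Longrightarrow> e \<alpha> ` underS L \<alpha> \<subseteq> V - {r}"
begin

definition fan_rel :: "('i \<times> 'b) rel" where
  "fan_rel = {((\<gamma>, r), (\<alpha>, e \<alpha> \<gamma>)) | \<alpha> \<gamma>. \<alpha> \<in> Field L \<and> \<gamma> \<in> underS L \<alpha>}"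

lemma fan_rel_edge: "(a, b) \<in> fan_rel \<Longrightarrow> snd a = r \<and> snd b \<noteq> r"
  using e_into unfolding fan_rel_def by fastforce

lemma fan_rel_level_less: "(a, b) \<in> fan_rel \<Longrightarrow> fst a \<noteq> fst b \<and> (fst a, fst b) \<in> L"
  unfolding fan_rel_def by (auto simp: underS_def)

lemma fan_rel_subset: "fan_rel \<subseteq> Sigma (Field L) (\<lambda>_. V) \<times> Sigma (Field L) (\<lambda>_. V)"
  using e_into root_in unfolding fan_rel_def by (fastforce simp: underS_def intro: FieldI1)

lemma trans_fan_rel: "trans fan_rel"
  using fan_rel_edge by (rule trans_if_targets_not_sources)

lemma tree_like_fan_rel: "tree_like fan_rel"
  unfolding tree_like_def
proof (intro allI impI)
  fix a b c
  assume "(a, c) \<in> fan_rel \<and> (b, c) \<in> fan_rel"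
  then obtain \<alpha> \<gamma> \<gamma>' where "\<alpha> \<in> Field L" "\<gamma> \<in> underS L \<alpha>" "\<gamma>' \<in> underS L \<alpha>"
    "a = (\<gamma>, r)" "b = (\<gamma>', r)" "e \<alpha> \<gamma> = e \<alpha> \<gamma>'"
    unfolding fan_rel_def by auto
  then have "a = b" using inj_e inj_onD by metis
  then show "a = b \<or> (a, b) \<in> fan_rel \<or> (b, a) \<in> fan_rel" by simp
qed

lemma fan_rel_joins_levels:
  assumes "\<alpha>1 \<in> Field L" and "\<alpha>0 \<noteq> \<alpha>1" and "(\<alpha>0, \<alpha>1) \<in> L"
  shows "((\<alpha>0, r), (\<alpha>1, e \<alpha>1 \<alpha>0)) \<in> fan_rel" and "e \<alpha>1 \<alpha>0 \<in> V"
proof -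
  have "\<alpha>0 \<in> underS L \<alpha>1" using assms(2,3) by (simp add: underS_def)
  then show "((\<alpha>0, r), (\<alpha>1, e \<alpha>1 \<alpha>0)) \<in> fan_rel" and "e \<alpha>1 \<alpha>0 \<in> V"
    using assms(1) e_into unfolding fan_rel_def by blast+
qed

lemma lambda_system_fan:
  assumes "Card_order L" and "infinite (Field L)" and "regularCard L" and "|V| <o L"
  shows "lambda_system L (Field L) (\<lambda>_. V) {fan_rel}"
  unfolding lambda_system_def
proof (intro conjI)
  show "Card_order L" "infinite (Field L)" "regularCard L" "Field L \<subseteq> Field L" "{fan_rel} \<noteq> {}"
    using assms by simp_all
  show "cofinal (Field L) L"
    unfolding cofinal_def using infinite_Card_order_limit[OF assms(1,2)] by blast
  show "\<forall>\<alpha>\<in>Field L. V \<noteq> {} \<and> |V| <o L"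
    using root_in assms(4) by blast
  show "|{fan_rel}| <o L"
    using assms(1,2) by (simp add: finite_card_of_ordLess_Card_order)
  show "\<forall>R\<in>{fan_rel}. R \<subseteq> Sigma (Field L) (\<lambda>_. V) \<times> Sigma (Field L) (\<lambda>_. V) \<and> trans R \<and> tree_like R"
    using fan_rel_subset trans_fan_rel tree_like_fan_rel by simp
  show "\<forall>R\<in>{fan_rel}. \<forall>a b. (a, b) \<in> R \<longrightarrow> fst a \<noteq> fst b \<and> (fst a, fst b) \<in> L"
    using fan_rel_level_less by simp
  show "\<forall>\<alpha>0\<in>Field L. \<forall>\<alpha>1\<in>Field L. \<alpha>0 \<noteq> \<alpha>1 \<and> (\<alpha>0, \<alpha>1) \<in> L \<longrightarrow>
          (\<exists>\<beta>0\<in>V. \<exists>\<beta>1\<in>V. \<exists>R\<in>{fan_rel}. ((\<alpha>0, \<beta>0), (\<alpha>1, \<beta>1)) \<in> R)"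
    using fan_rel_joins_levels root_in by (metis singletonI)
qed

lemma no_cofinal_branch_fan:
  assumes "Well_order L" and "Field L \<noteq> {}"
  shows "\<not> has_cofinal_branch L (Field L) (\<lambda>_. V) {fan_rel}"
proof
  assume "has_cofinal_branch L (Field L) (\<lambda>_. V) {fan_rel}"
  then obtain B where B: "is_branch (Field L) (\<lambda>_. V) fan_rel B"
    and cof: "cofinal {\<alpha>\<in>Field L. \<exists>\<beta>. (\<alpha>, \<beta>) \<in> B} L"
    unfolding has_cofinal_branch_def is_cofinal_branch_def by blast
  have comparable: "(x, y) \<in> fan_rel \<or> (y, x) \<in> fan_rel"
    if "x \<in> B" "y \<in> B" "fst x \<noteq> fst y" for x y
    using B that unfolding is_branch_def by auto
  obtain a where a: "a \<in> Field L" using assms(2) by blast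
  let ?C = "{\<alpha>\<in>Field L. \<exists>\<beta>. (\<alpha>, \<beta>) \<in> B}"
  obtain c1 c2 c3 where c: "c1 \<in> ?C" "c2 \<in> ?C" "c3 \<in> ?C" "c1 \<noteq> c2" "c2 \<noteq> c3" "c1 \<noteq> c3"
    by (rule cofinal_obtain_three_distinct[OF assms(1) a cof])
  then obtain b1 b2 b3 where "(c1, b1) \<in> B" "(c2, b2) \<in> B" "(c3, b3) \<in> B"
    by auto
  with c have "((c1, b1), (c2, b2)) \<in> fan_rel \<or> ((c2, b2), (c1, b1)) \<in> fan_rel"
    and "((c2, b2), (c3, b3)) \<in> fan_rel \<or> ((c3, b3), (c2, b2)) \<in> fan_rel"
    and "((c1, b1), (c3, b3)) \<in> fan_rel \<or> ((c3, b3), (c1, b1)) \<in> fan_rel"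
    by (simp_all add: comparable)
  then show False
    using not_pairwise_comparable3_if_targets_not_sources[where P = "\<lambda>a. snd a = r"] fan_rel_edge
    by blast
qed

end

lemma has_width_const_singleton:
  assumes "Card_order k" and "infinite (Field k)" and "I \<noteq> {}"
  shows "has_width I (\<lambda>_. Field k) {R} k"
  unfolding has_width_def
proof (intro conjI disjI2 allI impI)
  have k_iso: "|Field k| =o k" using card_of_Field_ordIso[OF assms(1)] .
  then show "\<forall>\<alpha>\<in>I. |Field k| \<le>o k"
    using ordIso_iff_ordLeq by blast
  show "|{R}| \<le>o k"
    using assms(1,2) by (simp add: finite_card_of_ordLess_Card_order ordLess_imp_ordLeq)
  show "\<exists>\<alpha>\<in>I. |A| <o |Field k|" if "A \<subseteq> Field k \<and> |A| <o k" for A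
    using that assms(3) k_iso ordLess_ordIso_trans ordIso_symmetric by blast
qed

theorem mainTheorem11:
  fixes k :: "'a rel"
  assumes "Card_order k" and "\<not> finite (Field k)"
  shows "\<exists>(I :: 'a set set) (K :: 'a set \<Rightarrow> 'a set) (RR :: ('a set \<times> 'a) rel set).
           lambda_system (cardSuc k) I K RR \<and> has_width I K RR k \<and>
           \<not> has_cofinal_branch (cardSuc k) I K RR"
proof -
  let ?L = "cardSuc k"
  have card_L: "Card_order ?L" and inf_L: "infinite (Field ?L)"
    using assms cardSuc_Card_order cardSuc_finite by blast+
  have reg_L: "regularCard ?L"
    using assms by (intro regularCard_cardSuc) (simp add: cinfinite_def)
  have small_levels: "|Field k| <o ?L"
    using card_of_Field_ordIso[OF assms(1)] cardSuc_greater[OF assms(1)] ordIso_ordLess_trans by blast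
  obtain r where r: "r \<in> Field k"
    using assms(2) by (metis finite.emptyI ex_in_conv)
  obtain e where "\<forall>\<alpha>\<in>Field ?L. inj_on (e \<alpha>) (underS ?L \<alpha>) \<and> e \<alpha> ` underS ?L \<alpha> \<subseteq> Field k - {r}"
    using ex_inj_underS_cardSuc_avoiding[OF assms r] by blast
  then interpret fan ?L "Field k" r e
    using r by unfold_locales auto
  have "Field ?L \<noteq> {}"
    using inf_L by auto
  show ?thesis
  proof (intro exI conjI)
    show "lambda_system ?L (Field ?L) (\<lambda>_. Field k) {fan_rel}"
      using card_L inf_L reg_L small_levels by (rule lambda_system_fan)
    show "has_width (Field ?L) (\<lambda>_. Field k) {fan_rel} k"
      using assms \<open>Field ?L \<noteq> {}\<close> by (rule has_width_const_singleton)
    show "\<not> has_cofinal_branch ?L (Field ?L) (\<lambda>_. Field k) {fan_rel}"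
      using card_order_on_well_order_on[OF card_L] \<open>Field ?L \<noteq> {}\<close> by (rule no_cofinal_branch_fan)
  qed
qed

end
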